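(* Let $\kappa\ge0$, $\beta>0$ and $U\in\mathbb{R}$. For $n\ge0$ sufficiently small (so that $t(n):=1+Un>0$), put $G(n):=t(n)^2+\kappa^2$ and let $\lambda^2(n)$ denote the unique positive solution $x$ of $$G(n)\Big[n\,t(n)^2+\frac{\beta^2}{16x}G(n)\Big]=x\,t(n)^2 .$$ Define $\delta(n):=4\lambda^2(n)-\beta(1+\kappa^2)$. Then, as $n\to0^+$, $$\delta(n)=A\,n+B\,n^2+C\,n^3+O(n^4),$$ where \begin{align*} A&=2(1+\kappa^2)-\beta U(\kappa^2-1),\\ B&=\beta\kappa^2U^2+4U+\frac{2(1+\kappa^2)}{\beta},\\ C&=\frac U\beta\Big(-\beta^2\kappa^2U^2+2\beta U+2\kappa^2+6\Big). \end{align*}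
   Context: The defining equation for $\lambda^2(n)$ is the superradiant steady-state equation $f(s)=0$ of the mean-field dissipative quantum Rabi model with Kerr nonlinearity, with $s=Un$ and $n=|\alpha|^2$ the photon-number order parameter, in normalized units ($\kappa,\lambda$ stand for $\kappa/\omega_c,\lambda/\omega_c$, $\beta=\omega_a/\omega_c$, $U=2KN/\omega_c$); multiplied by $x$ it is a quadratic in $x$ with exactly one positive root. $\delta$ measures the distance of the coupling from the normal-phase threshold $4\lambda_c^2=\beta(1+\kappa^2)$. *)

theory Defs
  imports "HOL-Analysis.Analysis" "HOL-Library.Landau_Symbols"
begin

definition tfun :: "real \<Rightarrow> real \<Rightarrow> real" where
  "tfun U n = 1 + U * n"

definition Gfun :: "real \<Rightarrow> real \<Rightarrow> real \<Rightarrow> real" where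
  "Gfun \<kappa> U n = (tfun U n)^2 + \<kappa>^2"

definition lam2 :: "real \<Rightarrow> real \<Rightarrow> real \<Rightarrow> real \<Rightarrow> real" where
  "lam2 \<kappa> \<beta> U n = (THE x. x > 0 \<and>
      Gfun \<kappa> U n * (n * (tfun U n)^2 + \<beta>^2 / (16 * x) * Gfun \<kappa> U n) = x * (tfun U n)^2)"

definition delta :: "real \<Rightarrow> real \<Rightarrow> real \<Rightarrow> real \<Rightarrow> real" where
  "delta \<kappa> \<beta> U n = 4 * lam2 \<kappa> \<beta> U n - \<beta> * (1 + \<kappa>^2)"

end

theory Submission
  imports Defs
begin

text \<open>Put \<open>y = 4 \<lambda>\<^sup>2(n)\<close>. Clearing the denominator, \<open>y\<close> is the positive root of
  \<open>Q\<^sub>n(y) = t\<^sup>2 y\<^sup>2 - 4 G n t\<^sup>2 y - (\<beta> G)\<^sup>2\<close>. For the cubic Taylor polynomial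
  \<open>z(n) = \<beta>(1+\<kappa>\<^sup>2) + A n + B n\<^sup>2 + C n\<^sup>3\<close> one checks the polynomial identity
  \<open>\<beta>\<^sup>2 Q\<^sub>n(z(n)) = n\<^sup>4 R(n)\<close>
  with an explicit quartic \<open>R\<close>. Since \<open>Q\<^sub>n(z) = Q\<^sub>n(z) - Q\<^sub>n(y) = (z - y)(t\<^sup>2(y + z) - 4 G n t\<^sup>2)\<close>
  and the second factor is at least \<open>t\<^sup>2 z - 4 G n t\<^sup>2 \<rightarrow> \<beta>(1+\<kappa>\<^sup>2) > 0\<close>, we get
  \<open>|y - z| = O(n\<^sup>4)\<close>.\<close>

lemma ex1_pos_root_quadratic:
  fixes a b c :: real
  assumes "a > 0" "c > 0"
  shows "\<exists>!x. x > 0 \<and> a * x^2 - b * x - c = 0"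
proof
  define x where "x = (b + sqrt (b^2 + 4 * a * c)) / (2 * a)"
  have disc: "b^2 < b^2 + 4 * a * c" using assms by simp
  have "\<bar>b\<bar> < sqrt (b^2 + 4 * a * c)"
    using real_sqrt_less_mono[OF disc] by simp
  then have "x > 0" unfolding x_def using assms(1) by simp
  moreover have "a * x^2 - b * x - c = 0"
    unfolding x_def using assms(1) disc by (simp add: field_simps power2_eq_square)
  ultimately show "x > 0 \<and> a * x^2 - b * x - c = 0" ..
  fix y assume y: "y > 0 \<and> a * y^2 - b * y - c = 0"
  show "y = x"
  proof (rule ccontr)
    assume "y \<noteq> x"
    moreover have "(y - x) * (a * (y + x) - b) = 0"
      using y \<open>a * x^2 - b * x - c = 0\<close> by (simp add: algebra_simps power2_eq_square)
    ultimately have "b = a * (y + x)" by simp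
    then have "c = - a * x * y"
      using \<open>a * x^2 - b * x - c = 0\<close> by (simp add: algebra_simps power2_eq_square)
    moreover have "a * x * y > 0" using assms(1) y \<open>x > 0\<close> by simp
    ultimately show False using assms(2) by linarith
  qed
qed

lemma pos_root_quadratic_dist_le:
  fixes a b c y z m :: real
  assumes "a > 0" "y > 0" "a * y^2 - b * y - c = 0" "a * z - b \<ge> m"
  shows "\<bar>y - z\<bar> * m \<le> \<bar>a * z^2 - b * z - c\<bar>"
proof -
  have "a * z^2 - b * z - c = (z - y) * (a * (y + z) - b)"
    using assms(3) by (simp add: algebra_simps power2_eq_square)
  moreover have "a * (y + z) - b \<ge> m"
    using assms(4) mult_pos_pos[OF assms(1,2)] by (simp add: algebra_simps)
  ultimately have "\<bar>y - z\<bar> * m \<le> \<bar>y - z\<bar> * \<bar>a * (y + z) - b\<bar>"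
    by (intro mult_left_mono) auto
  then show ?thesis
    using \<open>a * z^2 - b * z - c = (z - y) * (a * (y + z) - b)\<close>
    by (simp add: abs_mult abs_minus_commute)
qed

lemma lam2_pos_root:
  fixes \<kappa> \<beta> U n :: real
  assumes "\<beta> \<noteq> 0" "tfun U n \<noteq> 0"
  defines "t \<equiv> tfun U n" and "g \<equiv> Gfun \<kappa> U n" and "y \<equiv> 4 * lam2 \<kappa> \<beta> U n"
  shows "y > 0" and "t^2 * y^2 - 4 * g * n * t^2 * y - (\<beta> * g)^2 = 0"
proof -
  have "t^2 > 0" using assms(2) unfolding t_def by simp
  moreover have "g > 0" unfolding g_def Gfun_def using assms(2) by (simp add: add_pos_nonneg)
  ultimately have ex1: "\<exists>!x. x > 0 \<and> (16 * t^2) * x^2 - (16 * g * n * t^2) * x - (\<beta> * g)^2 = 0"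
    using assms(1) by (intro ex1_pos_root_quadratic) auto
  have equation_iff: "g * (n * t^2 + \<beta>^2 / (16 * x) * g) = x * t^2 \<longleftrightarrow>
        (16 * t^2) * x^2 - (16 * g * n * t^2) * x - (\<beta> * g)^2 = 0" if "x > 0" for x
    using that by (simp add: field_simps power2_eq_square) argo
  then have "\<exists>!x. x > 0 \<and> g * (n * t^2 + \<beta>^2 / (16 * x) * g) = x * t^2"
    using ex1 by (metis (no_types, lifting))
  then have "lam2 \<kappa> \<beta> U n > 0 \<and>
      (16 * t^2) * (lam2 \<kappa> \<beta> U n)^2 - (16 * g * n * t^2) * lam2 \<kappa> \<beta> U n - (\<beta> * g)^2 = 0"
    using theI'[of "\<lambda>x. x > 0 \<and> g * (n * t^2 + \<beta>^2 / (16 * x) * g) = x * t^2"]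
      equation_iff
    unfolding lam2_def t_def g_def by blast
  then show "y > 0" and "t^2 * y^2 - 4 * g * n * t^2 * y - (\<beta> * g)^2 = 0"
    unfolding y_def by (simp_all add: power2_eq_square algebra_simps)
qed

definition delta_taylor :: "real \<Rightarrow> real \<Rightarrow> real \<Rightarrow> real \<Rightarrow> real" where
  "delta_taylor \<kappa> \<beta> U n =
     (2 * (1 + \<kappa>^2) - \<beta> * U * (\<kappa>^2 - 1)) * n
   + (\<beta> * \<kappa>^2 * U^2 + 4 * U + 2 * (1 + \<kappa>^2) / \<beta>) * n^2
   + U / \<beta> * (- (\<beta>^2 * \<kappa>^2 * U^2) + 2 * \<beta> * U + 2 * \<kappa>^2 + 6) * n^3"

definition delta_residual :: "real \<Rightarrow> real \<Rightarrow> real \<Rightarrow> real \<Rightarrow> real" where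
  "delta_residual \<kappa> \<beta> U n =
     2 * (1 + \<kappa>^2) * (2 * (1 + \<kappa>^2) - 6 * (\<beta> * U)^2 - \<kappa>^2 * (\<beta> * U)^4)
   + 4 * U * (4 * (1 + \<kappa>^2) * (2 + \<kappa>^2) - (10 + 4 * \<kappa>^2) * (\<beta> * U)^2
       - \<kappa>^2 * (\<beta> * U)^4) * n
   + U^2 * (8 * (11 + 12 * \<kappa>^2 + 3 * \<kappa>^4) - (48 + 8 * \<kappa>^2 + 4 * \<kappa>^4) * (\<beta> * U)^2
       - 2 * \<kappa>^2 * (\<beta> * U)^4) * n^2
   + 8 * U^3 * (2 * (\<kappa>^2 + 2) * (\<kappa>^2 + 3) - (3 + 2 * \<kappa>^2 + \<kappa>^4) * (\<beta> * U)^2) * n^3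
   + U^4 * ((6 + 2 * \<kappa>^2 - \<kappa>^2 * (\<beta> * U)^2)^2 - 4 * (\<beta> * U)^2) * n^4"

lemma quadratic_at_delta_taylor:
  fixes \<kappa> \<beta> U n :: real
  assumes "\<beta> \<noteq> 0"
  defines "t \<equiv> tfun U n" and "g \<equiv> Gfun \<kappa> U n"
      and "z \<equiv> \<beta> * (1 + \<kappa>^2) + delta_taylor \<kappa> \<beta> U n"
  shows "t^2 * z^2 - 4 * g * n * t^2 * z - (\<beta> * g)^2 = n^4 * delta_residual \<kappa> \<beta> U n / \<beta>^2"
proof -
  have \<beta>z: "\<beta> * z = \<beta>^2 * (1 + \<kappa>^2) + \<beta> * (2 * (1 + \<kappa>^2) - \<beta> * U * (\<kappa>^2 - 1)) * n
     + (\<beta>^2 * \<kappa>^2 * U^2 + 4 * \<beta> * U + 2 * (1 + \<kappa>^2)) * n^2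
     + U * (- (\<beta>^2 * \<kappa>^2 * U^2) + 2 * \<beta> * U + 2 * \<kappa>^2 + 6) * n^3"
    unfolding z_def delta_taylor_def using assms(1) by (simp add: field_simps power2_eq_square)
  have "\<beta>^2 * (t^2 * z^2 - 4 * g * n * t^2 * z - (\<beta> * g)^2)
      = t^2 * (\<beta> * z)^2 - 4 * g * n * t^2 * \<beta> * (\<beta> * z) - \<beta>^4 * g^2"
    by algebra
  also have "\<dots> = n^4 * delta_residual \<kappa> \<beta> U n"
    unfolding \<beta>z t_def g_def tfun_def Gfun_def delta_residual_def by algebra
  finally show ?thesis
    using assms(1) by (simp add: eq_divide_eq mult.commute)
qed

lemma delta_taylor_error_eventually_le:
  fixes \<kappa> \<beta> U :: real
  assumes "\<beta> > 0"
  defines "L \<equiv> \<beta> * (1 + \<kappa>^2)"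
  shows "\<forall>\<^sub>F n in at_right 0.
    \<bar>delta \<kappa> \<beta> U n - delta_taylor \<kappa> \<beta> U n\<bar> \<le> 2 / (\<beta>^2 * L) * (n^4 * \<bar>delta_residual \<kappa> \<beta> U n\<bar>)"
proof -
  define z where "z n = L + delta_taylor \<kappa> \<beta> U n" for n
  define slope where "slope n = (tfun U n)^2 * z n - 4 * Gfun \<kappa> U n * n * (tfun U n)^2" for n
  have "L > 0" unfolding L_def using assms(1) by (simp add: add_pos_nonneg)
  have "continuous (at_right 0) slope"
    unfolding slope_def z_def delta_taylor_def tfun_def Gfun_def by (intro continuous_intros)
  moreover have "slope 0 = L" unfolding slope_def z_def delta_taylor_def tfun_def by simp
  ultimately have "(slope \<longlongrightarrow> L) (at_right 0)" by (simp add: continuous_within)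
  then have "\<forall>\<^sub>F n in at_right 0. slope n > L / 2"
    using \<open>L > 0\<close> by (intro order_tendstoD(1)) auto
  then show ?thesis
  proof eventually_elim
    case (elim n)
    define t g y where "t = tfun U n" and "g = Gfun \<kappa> U n" and "y = 4 * lam2 \<kappa> \<beta> U n"
    have "t \<noteq> 0" using elim \<open>L > 0\<close> unfolding slope_def t_def by auto
    then have "y > 0" and root: "t^2 * y^2 - 4 * g * n * t^2 * y - (\<beta> * g)^2 = 0"
      using lam2_pos_root[of \<beta> U n \<kappa>] assms(1) unfolding t_def g_def y_def by auto
    have "\<bar>y - z n\<bar> * (L / 2) \<le> \<bar>t^2 * (z n)^2 - 4 * g * n * t^2 * z n - (\<beta> * g)^2\<bar>"
      using elim \<open>t \<noteq> 0\<close> \<open>y > 0\<close> root unfolding slope_def t_def g_def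
      by (intro pos_root_quadratic_dist_le) auto
    also have "\<dots> = n^4 * \<bar>delta_residual \<kappa> \<beta> U n\<bar> / \<beta>^2"
      using quadratic_at_delta_taylor[of \<beta> U n \<kappa>] assms(1) unfolding t_def g_def z_def L_def
      by (simp add: abs_mult)
    finally have "\<bar>y - z n\<bar> * (L / 2) \<le> n^4 * \<bar>delta_residual \<kappa> \<beta> U n\<bar> / \<beta>^2" .
    moreover have "delta \<kappa> \<beta> U n - delta_taylor \<kappa> \<beta> U n = y - z n"
      unfolding y_def z_def delta_def L_def by simp
    ultimately show ?case
      using \<open>L > 0\<close> assms(1) by (simp only:) (simp add: field_simps)
  qed
qed

theorem mainTheorem5:
  fixes \<kappa> \<beta> U :: real
  assumes "\<kappa> \<ge> 0" and "\<beta> > 0"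
  defines "A \<equiv> 2 * (1 + \<kappa>^2) - \<beta> * U * (\<kappa>^2 - 1)"
      and "B \<equiv> \<beta> * \<kappa>^2 * U^2 + 4 * U + 2 * (1 + \<kappa>^2) / \<beta>"
      and "C \<equiv> U / \<beta> * (- (\<beta>^2 * \<kappa>^2 * U^2) + 2 * \<beta> * U + 2 * \<kappa>^2 + 6)"
  shows "(\<lambda>n. delta \<kappa> \<beta> U n - (A * n + B * n^2 + C * n^3)) \<in> O[at_right 0](\<lambda>n. n^4)"
proof -
  define c where "c = 2 / (\<beta>^2 * (\<beta> * (1 + \<kappa>^2)))"
  have "c > 0" unfolding c_def using assms(2) by (simp add: add_pos_nonneg)
  have residual_bounded: "delta_residual \<kappa> \<beta> U \<in> O[at_right 0](\<lambda>_. 1)"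
  proof (rule bigoI_tendsto)
    have "continuous (at_right 0) (delta_residual \<kappa> \<beta> U)"
      unfolding delta_residual_def by (intro continuous_intros)
    then show "((\<lambda>n. delta_residual \<kappa> \<beta> U n / 1) \<longlongrightarrow> delta_residual \<kappa> \<beta> U 0) (at_right 0)"
      by (simp add: continuous_within)
  qed simp
  have "(\<lambda>n. delta \<kappa> \<beta> U n - (A * n + B * n^2 + C * n^3))
      = (\<lambda>n. delta \<kappa> \<beta> U n - delta_taylor \<kappa> \<beta> U n)"
    unfolding A_def B_def C_def delta_taylor_def ..
  also have "\<dots> \<in> O[at_right 0](\<lambda>n. c * (n^4 * delta_residual \<kappa> \<beta> U n))"
    using delta_taylor_error_eventually_le[of \<beta> \<kappa> U] assms(2) \<open>c > 0\<close>
    by (intro landau_o.big_mono) (simp add: c_def abs_mult)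
  also have "(\<lambda>n. c * (n^4 * delta_residual \<kappa> \<beta> U n)) \<in> O[at_right 0](\<lambda>n. n^4)"
    using \<open>c > 0\<close> residual_bounded by (simp add: landau_o.big_1_mult)
  finally show ?thesis .
qed

end
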